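(* Let $0<q<1$, $n\in\mathbb{N}_0$, and let $x,y,r,f,g,v,w,u$ be complex parameters with $y\neq0$. Then \begin{align*} &\sum_{k=0}^{n}\frac{(q^{-n},x;q)_k\,q^k}{(q,y;q)_k}\;{}_3\Phi_2\left[\begin{matrix}r,f,g;\\ v,w;\end{matrix}\;q;\,uq^k\right]\\ &\qquad=\frac{x^n\left(\frac{y}{x};q\right)_n}{(y;q)_n}\sum_{k,j\geqq0}\frac{(r,f,g;q)_{k+j}}{(q;q)_j\,(v,w;q)_{k+j}}\,\frac{\left(\frac{q^{1-n}}{y},\frac{qx}{y};q\right)_k}{\left(\frac{xq^{1-n}}{y},q;q\right)_k}\,u^{k+j}\left(\frac{q}{y}\right)^j. \end{align*}
   Context: Throughout $0<q<1$. For complex $\alpha$: $(\alpha;q)_0=1$, $(\alpha;q)_n=\prod_{k=0}^{n-1}(1-\alpha q^k)$, and $(\alpha_1,\dots,\alpha_m;q)_n=(\alpha_1;q)_n\cdots(\alpha_m;q)_n$. The basic hypergeometric series is ${}_{3}\Phi_{2}\left[\begin{matrix}a_1,a_2,a_3;\\ b_1,b_2;\end{matrix}\,q;z\right]=\sum_{n=0}^\infty\frac{(a_1,a_2,a_3;q)_n}{(b_1,b_2;q)_n}\frac{z^n}{(q;q)_n}$. *)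

theory Defs
  imports "HOL-Analysis.Analysis"
begin

definition qpoch :: "complex \<Rightarrow> complex \<Rightarrow> nat \<Rightarrow> complex" where
  "qpoch a q n = (\<Prod>k<n. 1 - a * q ^ k)"

definition phi32 :: "complex \<Rightarrow> complex \<Rightarrow> complex \<Rightarrow> complex \<Rightarrow> complex \<Rightarrow> complex \<Rightarrow> complex \<Rightarrow> complex" where
  "phi32 a1 a2 a3 b1 b2 q z =
     (\<Sum>n. qpoch a1 q n * qpoch a2 q n * qpoch a3 q n / (qpoch b1 q n * qpoch b2 q n)
           * z ^ n / qpoch q q n)"

end

(* Expanding each 3phi2 in powers of u and interchanging with the terminating k-sum, the
   coefficient of u^m on the left is (r,f,g;q)_m / (v,w;q)_m times the moment
   sum_k c_k q^(k m) / (q;q)_m of the terminating weights c_k.  By the q-binomial theorem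
   q^(k m) / (q;q)_m is a convolution of (q^(1-k)/y;q)_i q^(k i) / (q;q)_i with
   (q/y)^(m-i) / (q;q)_(m-i), and every resulting k-sum is a q-Chu-Vandermonde sum with the
   shifted parameter y q^(-i).  The moment thereby becomes the sum over the diagonal k + j = m
   of the double series on the right, which converges absolutely because all the quotients of
   q-shifted factorials involved grow subexponentially. *)

theory Submission
  imports Defs
begin

unbundle no vec_syntax
notation fps_nth (infixl \<open>$\<close> 75)

section \<open>q-shifted factorials\<close>

lemma qpoch_0 [simp]: "qpoch a Q 0 = 1"
  by (simp add: qpoch_def)

lemma qpoch_Suc: "qpoch a Q (Suc m) = qpoch a Q m * (1 - a * Q ^ m)"
  by (simp add: qpoch_def)

lemma qpoch_zero_base [simp]: "qpoch 0 Q m = 1"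
  by (simp add: qpoch_def)

lemma qpoch_add: "qpoch a Q (m + k) = qpoch a Q m * qpoch (a * Q ^ m) Q k"
  by (induction k) (simp_all add: qpoch_Suc power_add mult.assoc)

lemma qpoch_Suc_shift: "qpoch a Q (Suc m) = (1 - a) * qpoch (a * Q) Q m"
  using qpoch_add[of a Q 1 m] by (simp add: qpoch_def)

lemma qpoch_eq_0_iff: "qpoch a Q n = 0 \<longleftrightarrow> (\<exists>j<n. a * Q ^ j = 1)"
  by (auto simp: qpoch_def)

lemma qpoch_nonzero_le: "qpoch a Q n \<noteq> 0 \<Longrightarrow> k \<le> n \<Longrightarrow> qpoch a Q k \<noteq> 0"
  using qpoch_add[of a Q k "n - k"] by auto

lemma qpoch_self_nonzero:
  assumes "norm Q < 1"
  shows "qpoch Q Q m \<noteq> 0"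
proof
  assume "qpoch Q Q m = 0"
  then obtain j where "Q ^ Suc j = 1" by (auto simp: qpoch_eq_0_iff)
  then have "norm Q ^ Suc j = 1" by (metis norm_one norm_power)
  moreover have "norm Q ^ Suc j < 1" using assms norm_ge_zero power_less_one_iff by blast
  ultimately show False by simp
qed

lemma qpoch_reflect:
  assumes "Q \<noteq> 0" "c \<noteq> 0"
  shows "qpoch (c / Q ^ l) Q l * (\<Prod>j<l. Q ^ Suc j) = (- c) ^ l * qpoch (Q / c) Q l"
proof (induction l)
  case (Suc l)
  have "c / Q ^ Suc l * Q = c / Q ^ l" using assms by (simp add: field_simps)
  then have "qpoch (c / Q ^ Suc l) Q (Suc l) * (\<Prod>j<Suc l. Q ^ Suc j)
      = ((1 - c / Q ^ Suc l) * Q ^ Suc l) * (qpoch (c / Q ^ l) Q l * (\<Prod>j<l. Q ^ Suc j))"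
    by (simp only: qpoch_Suc_shift prod.lessThan_Suc) (simp add: algebra_simps)
  also have "\<dots> = (Q ^ Suc l - c) * ((- c) ^ l * qpoch (Q / c) Q l)"
    using assms Suc.IH by (simp add: field_simps)
  also have "\<dots> = (- c) ^ Suc l * qpoch (Q / c) Q (Suc l)"
    using assms by (simp add: qpoch_Suc field_simps)
  finally show ?case .
qed simp

lemma qpoch_add_reflect:
  assumes "Q \<noteq> 0" "a \<noteq> 0"
  shows "qpoch a Q (m + i) * (\<Prod>j<i. Q ^ Suc j)
       = qpoch a Q m * (- (a * Q ^ (m + i))) ^ i * qpoch (Q / (a * Q ^ (m + i))) Q i"
  using qpoch_reflect[of Q "a * Q ^ (m + i)" i] assms
  by (simp add: qpoch_add power_add mult.assoc)

lemma qpoch_reverse: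
  assumes Q: "Q \<noteq> 0" and a: "a \<noteq> 0" and "i \<le> n"
  shows "qpoch a Q n * qpoch Q Q (n - i) * Q ^ i * qpoch (1 / Q ^ n) Q i
       = qpoch a Q (n - i) * a ^ i * qpoch (Q / (a * Q ^ n)) Q i * qpoch Q Q n"
proof -
  define m where "m = n - i"
  have n: "n = m + i" using \<open>i \<le> n\<close> by (simp add: m_def)
  define P where "P = (\<Prod>j<i. Q ^ Suc j)"
  have reflect_a: "qpoch a Q n * P = qpoch a Q m * (- (a * Q ^ n)) ^ i * qpoch (Q / (a * Q ^ n)) Q i"
    unfolding P_def n by (rule qpoch_add_reflect[OF Q a])
  have reflect_Q: "qpoch Q Q n * P = qpoch Q Q m * (- (Q * Q ^ n)) ^ i * qpoch (1 / Q ^ n) Q i"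
    using qpoch_add_reflect[OF Q Q, of m i] Q unfolding P_def n by simp
  have "qpoch a Q n * qpoch Q Q m * Q ^ i * qpoch (1 / Q ^ n) Q i * P
      = (qpoch a Q n * P) * (qpoch Q Q m * Q ^ i * qpoch (1 / Q ^ n) Q i)"
    by (simp only: mult_ac)
  also have "\<dots> = qpoch a Q m * (- (a * Q ^ n)) ^ i * qpoch (Q / (a * Q ^ n)) Q i
      * (qpoch Q Q m * Q ^ i * qpoch (1 / Q ^ n) Q i)"
    by (simp only: reflect_a)
  also have "\<dots> = qpoch a Q m * qpoch (Q / (a * Q ^ n)) Q i * qpoch Q Q m * qpoch (1 / Q ^ n) Q i
      * ((- (a * Q ^ n)) ^ i * Q ^ i)"
    by (simp only: mult_ac)
  also have "(- (a * Q ^ n)) ^ i * Q ^ i = a ^ i * (- (Q * Q ^ n)) ^ i"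
  proof -
    have "- (a * Q ^ n) * Q = a * (- (Q * Q ^ n))" by simp
    then show ?thesis by (metis power_mult_distrib)
  qed
  also have "qpoch a Q m * qpoch (Q / (a * Q ^ n)) Q i * qpoch Q Q m * qpoch (1 / Q ^ n) Q i
      * (a ^ i * (- (Q * Q ^ n)) ^ i)
    = qpoch a Q m * a ^ i * qpoch (Q / (a * Q ^ n)) Q i
      * (qpoch Q Q m * (- (Q * Q ^ n)) ^ i * qpoch (1 / Q ^ n) Q i)"
    by (simp only: mult_ac)
  also have "\<dots> = qpoch a Q m * a ^ i * qpoch (Q / (a * Q ^ n)) Q i * qpoch Q Q n * P"
    by (simp only: reflect_Q mult.assoc)
  finally show ?thesis
    using Q by (simp add: m_def P_def)
qed

lemma qpoch_swap:
  assumes Q: "Q \<noteq> 0" and a: "a \<noteq> 0"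
  shows "qpoch (a / Q ^ k) Q l * Q ^ (k * l) * qpoch (Q / (a * Q ^ l)) Q k
       = qpoch a Q l * qpoch (Q / a) Q k"
proof -
  define P where "P = (\<Prod>j<k. Q ^ Suc j)"
  have split: "qpoch (a / Q ^ k) Q (l + k) = qpoch (a / Q ^ k) Q k * qpoch a Q l"
    using Q qpoch_add[of "a / Q ^ k" Q k l] by (simp add: add.commute)
  have "- (a * Q ^ l) = - a * Q ^ l" by simp
  then have pw: "(- (a * Q ^ l)) ^ k = (- a) ^ k * Q ^ (k * l)"
    by (metis power_mult power_mult_distrib mult.commute)
  have "(- a) ^ k * (qpoch (a / Q ^ k) Q l * Q ^ (k * l) * qpoch (Q / (a * Q ^ l)) Q k)
      = qpoch (a / Q ^ k) Q l * (- (a * Q ^ l)) ^ k * qpoch (Q / (a * Q ^ l)) Q k"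
    by (simp only: pw mult_ac)
  also have "\<dots> = qpoch (a / Q ^ k) Q (l + k) * P"
    using qpoch_add_reflect[of Q "a / Q ^ k" l k] Q a unfolding P_def by (simp add: power_add)
  also have "\<dots> = (- a) ^ k * (qpoch a Q l * qpoch (Q / a) Q k)"
    using qpoch_reflect[OF Q a, of k] unfolding split P_def by (simp only: mult_ac)
  finally show ?thesis using a by simp
qed

lemma isCont_qpoch [continuous_intros]: "isCont f y \<Longrightarrow> isCont (\<lambda>z. qpoch (f z) Q k) y"
  unfolding qpoch_def by (intro continuous_intros)

lemma eventually_qpoch_scaled_nonzero:
  assumes "c \<noteq> 0"
  shows "\<forall>\<^sub>F y in at y0. qpoch (c * y) Q n \<noteq> 0"
proof -
  have "\<forall>\<^sub>F y in at y0. \<forall>z\<in>(\<lambda>j. 1 / (c * Q ^ j)) ` {..<n}. y \<noteq> z"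
    by (rule eventually_ball_finite) (auto intro: eventually_neq_at_within)
  then show ?thesis
  proof (rule eventually_mono)
    fix y assume avoid: "\<forall>z\<in>(\<lambda>j. 1 / (c * Q ^ j)) ` {..<n}. y \<noteq> z"
    show "qpoch (c * y) Q n \<noteq> 0"
    proof
      assume "qpoch (c * y) Q n = 0"
      then obtain j where "j < n" and "y * (c * Q ^ j) = 1"
        by (auto simp: qpoch_eq_0_iff mult_ac)
      then show False
        using avoid by (metis (no_types, lifting) image_eqI lessThan_iff mult_zero_right
            nonzero_eq_divide_eq zero_neq_one)
    qed
  qed
qed

section \<open>The q-binomial convolution\<close>

definition fps_dilate :: "complex \<Rightarrow> complex fps \<Rightarrow> complex fps" where
  "fps_dilate c F = Abs_fps (\<lambda>n. c ^ n * F $ n)"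

lemma fps_dilate_nth [simp]: "fps_dilate c F $ n = c ^ n * F $ n"
  by (simp add: fps_dilate_def)

lemma fps_dilate_mult: "fps_dilate c (F * G) = fps_dilate c F * fps_dilate c G"
  by (simp add: fps_dilate_def fps_compose_linear[symmetric] fps_compose_mult_distrib)

lemma fps_dilate_dilate: "fps_dilate c (fps_dilate d F) = fps_dilate (d * c) F"
  by (rule fps_ext) (simp add: power_mult_distrib mult_ac)

lemma fps_dilate_1 [simp]: "fps_dilate 1 F = F"
  by (rule fps_ext) simp

definition qbinomial_fps :: "complex \<Rightarrow> complex \<Rightarrow> complex fps" where
  "qbinomial_fps Q a = Abs_fps (\<lambda>m. qpoch a Q m / qpoch Q Q m)"

lemma qbinomial_fps_nth [simp]: "qbinomial_fps Q a $ m = qpoch a Q m / qpoch Q Q m"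
  by (simp add: qbinomial_fps_def)

lemma fps_one_minus_linear_mult_nth:
  fixes c :: complex
  shows "((1 - fps_const c * fps_X) * F) $ n = F $ n - (if n = 0 then 0 else c * F $ (n - 1))"
  by (simp only: left_diff_distrib mult_1_left mult.assoc fps_sub_nth fps_mult_left_const_nth
      fps_X_mult_nth) simp

lemma fps_one_minus_linear_mult_eqI:
  fixes c d :: complex
  assumes "\<And>m. F $ Suc m - c * F $ m = G $ Suc m - d * G $ m" and "F $ 0 = G $ 0"
  shows "(1 - fps_const c * fps_X) * F = (1 - fps_const d * fps_X) * G"
proof (rule fps_ext)
  fix n
  show "((1 - fps_const c * fps_X) * F) $ n = ((1 - fps_const d * fps_X) * G) $ n"
    using assms by (cases n) (simp_all only: fps_one_minus_linear_mult_nth, simp_all)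
qed

lemma qbinomial_fps_functional_equation:
  assumes "\<And>m. qpoch Q Q m \<noteq> 0"
  shows "(1 - fps_const c * fps_X) * fps_dilate c (qbinomial_fps Q b)
       = (1 - fps_const (c * b) * fps_X) * fps_dilate (c * Q) (qbinomial_fps Q b)"
proof (rule fps_one_minus_linear_mult_eqI)
  fix m
  have "1 - Q ^ Suc m \<noteq> 0"
    using assms[of "Suc m"] by (auto simp: qpoch_Suc)
  then show "fps_dilate c (qbinomial_fps Q b) $ Suc m - c * fps_dilate c (qbinomial_fps Q b) $ m
      = fps_dilate (c * Q) (qbinomial_fps Q b) $ Suc m - c * b * fps_dilate (c * Q) (qbinomial_fps Q b) $ m"
    using assms[of m] by (simp add: qpoch_Suc field_simps)
qed simp

(* Both sides have constant term 1 and satisfy (1 - z) P(z) = (1 - a b z) P(q z). *)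
lemma qbinomial_fps_product:
  assumes QQ: "\<And>m. qpoch Q Q m \<noteq> 0"
  shows "qbinomial_fps Q a * fps_dilate a (qbinomial_fps Q b) = qbinomial_fps Q (a * b)"
proof -
  define P where "P = qbinomial_fps Q a * fps_dilate a (qbinomial_fps Q b)"
  have "(1 - fps_const 1 * fps_X) * P
      = fps_dilate Q (qbinomial_fps Q a) * ((1 - fps_const a * fps_X) * fps_dilate a (qbinomial_fps Q b))"
    using qbinomial_fps_functional_equation[OF QQ, of 1 a]
    by (simp only: P_def fps_dilate_1 mult_1 mult.assoc[symmetric]) (simp only: mult_ac)
  also have "\<dots> = fps_dilate Q (qbinomial_fps Q a)
      * ((1 - fps_const (a * b) * fps_X) * fps_dilate (a * Q) (qbinomial_fps Q b))"
    by (simp only: qbinomial_fps_functional_equation[OF QQ])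
  also have "\<dots> = (1 - fps_const (a * b) * fps_X) * fps_dilate Q P"
    by (simp only: P_def fps_dilate_mult fps_dilate_dilate mult_ac)
  finally have eq: "(1 - fps_const 1 * fps_X) * P = (1 - fps_const (a * b) * fps_X) * fps_dilate Q P" .
  have "P $ m = qpoch (a * b) Q m / qpoch Q Q m" for m
  proof (induction m)
    case (Suc m)
    have "1 - Q ^ Suc m \<noteq> 0"
      using QQ[of "Suc m"] by (auto simp: qpoch_Suc)
    moreover have "P $ Suc m * (1 - Q ^ Suc m) = P $ m * (1 - a * b * Q ^ m)"
      using arg_cong[OF eq, of "\<lambda>F. F $ Suc m"]
      by (simp only: fps_one_minus_linear_mult_nth) (simp add: algebra_simps)
    ultimately show ?case using Suc.IH QQ[of m] by (simp add: qpoch_Suc field_simps)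
  qed (simp add: P_def)
  then show ?thesis by (simp add: P_def fps_eq_iff)
qed

lemma qbinomial_convolution:
  assumes "\<And>m. qpoch Q Q m \<noteq> 0"
  shows "(\<Sum>i\<le>m. qpoch a Q i / qpoch Q Q i * (a ^ (m - i) * qpoch b Q (m - i) / qpoch Q Q (m - i)))
        = qpoch (a * b) Q m / qpoch Q Q m"
  using arg_cong[OF qbinomial_fps_product[OF assms, of a b], of "\<lambda>F. F $ m"]
  by (simp add: fps_mult_nth atLeast0AtMost)

(* The q-binomial convolution with b = 0, taken at a / q^k. *)
lemma power_div_qpoch_expansion:
  assumes Q: "Q \<noteq> 0" and QQ: "\<And>m. qpoch Q Q m \<noteq> 0"
  shows "Q ^ (k * m) / qpoch Q Q m
       = (\<Sum>i\<le>m. qpoch (a / Q ^ k) Q i * Q ^ (k * i) / qpoch Q Q i * (a ^ (m - i) / qpoch Q Q (m - i)))"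
proof -
  have "Q ^ (k * m) / qpoch Q Q m
      = Q ^ (k * m) * (\<Sum>i\<le>m. qpoch (a / Q ^ k) Q i / qpoch Q Q i
          * ((a / Q ^ k) ^ (m - i) * qpoch 0 Q (m - i) / qpoch Q Q (m - i)))"
    using qbinomial_convolution[OF QQ, where m=m and a="a / Q ^ k" and b=0] by simp
  also have "\<dots> = (\<Sum>i\<le>m. qpoch (a / Q ^ k) Q i * Q ^ (k * i) / qpoch Q Q i
                        * (a ^ (m - i) / qpoch Q Q (m - i)))"
    unfolding sum_distrib_left
  proof (rule sum.cong[OF refl])
    fix i assume "i \<in> {..m}"
    then have "Q ^ (k * m) = Q ^ (k * i) * (Q ^ k) ^ (m - i)"
      by (simp add: power_add[symmetric] power_mult[symmetric] diff_mult_distrib2)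
    then have e: "Q ^ (k * m) * (a / Q ^ k) ^ (m - i) = Q ^ (k * i) * a ^ (m - i)"
      using Q by (simp add: power_divide)
    have "Q ^ (k * m) * (qpoch (a / Q ^ k) Q i / qpoch Q Q i
          * ((a / Q ^ k) ^ (m - i) * qpoch 0 Q (m - i) / qpoch Q Q (m - i)))
        = (Q ^ (k * m) * (a / Q ^ k) ^ (m - i)) * qpoch (a / Q ^ k) Q i / qpoch Q Q i / qpoch Q Q (m - i)"
      by simp
    then show "Q ^ (k * m) * (qpoch (a / Q ^ k) Q i / qpoch Q Q i
          * ((a / Q ^ k) ^ (m - i) * qpoch 0 Q (m - i) / qpoch Q Q (m - i)))
        = qpoch (a / Q ^ k) Q i * Q ^ (k * i) / qpoch Q Q i * (a ^ (m - i) / qpoch Q Q (m - i))"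
      unfolding e by simp
  qed
  finally show ?thesis .
qed

section \<open>q-Chu--Vandermonde sums\<close>

(* The q-binomial convolution with a = q^(1-n) / c, read backwards. *)
lemma q_Chu_Vandermonde:
  assumes Q: "Q \<noteq> 0" and QQ: "\<And>m. qpoch Q Q m \<noteq> 0"
    and c: "c \<noteq> 0" and cn: "qpoch c Q n \<noteq> 0" and x: "x \<noteq> 0"
  shows "(\<Sum>k\<le>n. qpoch (1 / Q ^ n) Q k * qpoch x Q k * Q ^ k / (qpoch Q Q k * qpoch c Q k))
       = x ^ n * qpoch (c / x) Q n / qpoch c Q n"
proof -
  define a where "a = Q / (c * Q ^ n)"
  have a: "a \<noteq> 0" and ac: "Q / (a * Q ^ n) = c"
    using Q c by (simp_all add: a_def)
  define P where "P = (\<Prod>j<n. Q ^ Suc j)"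
  have P: "P \<noteq> 0" using Q by (simp add: P_def)
  have reflect_a: "qpoch a Q n * P = (- (Q / c)) ^ n * qpoch c Q n"
    using qpoch_reflect[of Q "Q / c" n] Q c unfolding P_def by (simp add: a_def field_simps)
  have "- (Q * x / c) = x * (- (Q / c))" by simp
  then have "(- (Q * x / c)) ^ n = x ^ n * (- (Q / c)) ^ n"
    by (metis power_mult_distrib)
  moreover have "Q * x / c / Q ^ n = a * x" and "Q / (Q * x / c) = c / x"
    using Q by (simp_all add: a_def)
  ultimately have reflect_ax: "qpoch (a * x) Q n * P = x ^ n * (- (Q / c)) ^ n * qpoch (c / x) Q n"
    using qpoch_reflect[of Q "Q * x / c" n] Q c x unfolding P_def by simp
  have an: "qpoch a Q n \<noteq> 0" using reflect_a P cn Q c by auto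
  have term_eq: "qpoch a Q (n - i) / qpoch Q Q (n - i) * (a ^ i * qpoch x Q i / qpoch Q Q i)
      = qpoch a Q n / qpoch Q Q n
        * (qpoch (1 / Q ^ n) Q i * qpoch x Q i * Q ^ i / (qpoch Q Q i * qpoch c Q i))"
    if "i \<le> n" for i
  proof -
    have ci: "qpoch c Q i \<noteq> 0" using qpoch_nonzero_le[OF cn that] .
    have "qpoch a Q (n - i) / qpoch Q Q (n - i) * (a ^ i * qpoch x Q i / qpoch Q Q i)
        = (qpoch a Q (n - i) * a ^ i) * qpoch x Q i / (qpoch Q Q (n - i) * qpoch Q Q i)"
      by simp
    also have "qpoch a Q (n - i) * a ^ i
        = qpoch a Q n * qpoch Q Q (n - i) * Q ^ i * qpoch (1 / Q ^ n) Q i / (qpoch c Q i * qpoch Q Q n)"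
      using qpoch_reverse[OF Q a that] QQ[of n] ci by (simp add: ac field_simps)
    finally show ?thesis
      using QQ[of "n - i"] by (simp add: field_simps)
  qed
  have "qpoch (a * x) Q n / qpoch Q Q n
      = (\<Sum>i\<le>n. qpoch a Q i / qpoch Q Q i * (a ^ (n - i) * qpoch x Q (n - i) / qpoch Q Q (n - i)))"
    by (rule qbinomial_convolution[OF QQ, symmetric])
  also have "\<dots> = (\<Sum>i\<le>n. qpoch a Q (n - i) / qpoch Q Q (n - i) * (a ^ i * qpoch x Q i / qpoch Q Q i))"
    by (rule sum.reindex_bij_witness[where i="\<lambda>i. n - i" and j="\<lambda>i. n - i"]) auto
  also have "\<dots> = qpoch a Q n / qpoch Q Q n
      * (\<Sum>k\<le>n. qpoch (1 / Q ^ n) Q k * qpoch x Q k * Q ^ k / (qpoch Q Q k * qpoch c Q k))"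
    unfolding sum_distrib_left by (rule sum.cong[OF refl], rule term_eq) simp
  finally have "(\<Sum>k\<le>n. qpoch (1 / Q ^ n) Q k * qpoch x Q k * Q ^ k / (qpoch Q Q k * qpoch c Q k))
      = (qpoch (a * x) Q n * P) / (qpoch a Q n * P)"
    using an P QQ[of n] by (simp add: field_simps)
  also have "\<dots> = x ^ n * qpoch (c / x) Q n / qpoch c Q n"
    using Q c unfolding reflect_a reflect_ax by simp
  finally show ?thesis .
qed

(* q_Chu_Vandermonde with c = y / q^l, after qpoch_swap.  The hypothesis cn excludes finitely
   many y; q_Chu_Vandermonde_shifted recovers them by continuity in y. *)
lemma q_Chu_Vandermonde_shifted_generic:
  assumes Q: "Q \<noteq> 0" and QQ: "\<And>m. qpoch Q Q m \<noteq> 0"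
    and x: "x \<noteq> 0" and y: "y \<noteq> 0" and yn: "qpoch y Q n \<noteq> 0"
    and cn: "qpoch (y / Q ^ l) Q n \<noteq> 0" and xyn: "qpoch (x * Q / (y * Q ^ n)) Q l \<noteq> 0"
  shows "(\<Sum>k\<le>n. qpoch (1 / Q ^ n) Q k * qpoch x Q k * Q ^ k / (qpoch Q Q k * qpoch y Q k)
            * (qpoch (Q / y / Q ^ k) Q l * Q ^ (k * l)))
       = x ^ n * qpoch (y / x) Q n / qpoch y Q n
         * (qpoch (Q / (y * Q ^ n)) Q l * qpoch (Q * x / y) Q l / qpoch (x * Q / (y * Q ^ n)) Q l)"
proof -
  define c where "c = y / Q ^ l"
  have c: "c \<noteq> 0" using y Q by (simp add: c_def)
  have swap: "qpoch (Q / y / Q ^ k) Q l * Q ^ (k * l) * qpoch c Q k = qpoch (Q / y) Q l * qpoch y Q k" for k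
    using qpoch_swap[of Q "Q / y" k l] Q y by (simp add: c_def)
  have term_eq: "qpoch (1 / Q ^ n) Q k * qpoch x Q k * Q ^ k / (qpoch Q Q k * qpoch y Q k)
        * (qpoch (Q / y / Q ^ k) Q l * Q ^ (k * l))
      = qpoch (Q / y) Q l * (qpoch (1 / Q ^ n) Q k * qpoch x Q k * Q ^ k / (qpoch Q Q k * qpoch c Q k))"
    if "k \<le> n" for k
  proof -
    have "qpoch y Q k \<noteq> 0" and "qpoch c Q k \<noteq> 0"
      using qpoch_nonzero_le[OF yn that] qpoch_nonzero_le[OF cn[folded c_def] that] by auto
    then have "qpoch (Q / y / Q ^ k) Q l * Q ^ (k * l) = qpoch (Q / y) Q l * qpoch y Q k / qpoch c Q k"
      using swap[of k] by (simp add: field_simps)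
    then show ?thesis
      using \<open>qpoch y Q k \<noteq> 0\<close> by simp
  qed
  have "qpoch (Q / y) Q l = qpoch c Q n * Q ^ (n * l) * qpoch (Q / (y * Q ^ n)) Q l / qpoch y Q n"
    using swap[of n] yn by (simp add: field_simps)
  moreover have "qpoch (c / x) Q n
      = qpoch (Q * x / y) Q l * qpoch (y / x) Q n / (Q ^ (n * l) * qpoch (x * Q / (y * Q ^ n)) Q l)"
    using qpoch_swap[of Q "Q * x / y" n l] Q x y xyn by (simp add: c_def field_simps)
  moreover have "(\<Sum>k\<le>n. qpoch (1 / Q ^ n) Q k * qpoch x Q k * Q ^ k / (qpoch Q Q k * qpoch y Q k)
            * (qpoch (Q / y / Q ^ k) Q l * Q ^ (k * l)))
      = qpoch (Q / y) Q l * (x ^ n * qpoch (c / x) Q n / qpoch c Q n)"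
    unfolding q_Chu_Vandermonde[OF Q QQ c cn[folded c_def] x, symmetric] sum_distrib_left
    by (rule sum.cong[OF refl], rule term_eq) simp
  ultimately show ?thesis
    using cn Q by (simp add: c_def field_simps)
qed

lemma q_Chu_Vandermonde_shifted:
  assumes Q: "Q \<noteq> 0" and QQ: "\<And>m. qpoch Q Q m \<noteq> 0"
    and x: "x \<noteq> 0" and y: "y \<noteq> 0" and yn: "qpoch y Q n \<noteq> 0"
    and xyn: "qpoch (x * Q / (y * Q ^ n)) Q l \<noteq> 0"
  shows "(\<Sum>k\<le>n. qpoch (1 / Q ^ n) Q k * qpoch x Q k * Q ^ k / (qpoch Q Q k * qpoch y Q k)
            * (qpoch (Q / y / Q ^ k) Q l * Q ^ (k * l)))
       = x ^ n * qpoch (y / x) Q n / qpoch y Q n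
         * (qpoch (Q / (y * Q ^ n)) Q l * qpoch (Q * x / y) Q l / qpoch (x * Q / (y * Q ^ n)) Q l)"
    (is "?F y = ?R y")
proof -
  have cont_F: "isCont ?F y"
    using Q QQ y qpoch_nonzero_le[OF yn] by (intro continuous_intros) auto
  have cont_R: "isCont ?R y"
    using y x yn xyn Q by (intro continuous_intros) auto
  have "\<forall>\<^sub>F z in at y. ?F z = ?R z"
  proof -
    have "\<forall>\<^sub>F z in at y. z \<noteq> 0"
      by (rule eventually_neq_at_within)
    moreover have "\<forall>\<^sub>F z in at y. qpoch z Q n \<noteq> 0"
      using eventually_qpoch_scaled_nonzero[of 1 Q n y] by simp
    moreover have "\<forall>\<^sub>F z in at y. qpoch (z / Q ^ l) Q n \<noteq> 0"
      using eventually_qpoch_scaled_nonzero[of "1 / Q ^ l" Q n y] Q by simp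
    moreover have "isCont (\<lambda>z. qpoch (x * Q / (z * Q ^ n)) Q l) y"
      using y Q by (intro continuous_intros) auto
    then have "\<forall>\<^sub>F z in at y. qpoch (x * Q / (z * Q ^ n)) Q l \<noteq> 0"
      using xyn by (auto simp: isCont_def intro: tendsto_imp_eventually_ne)
    ultimately show ?thesis
    proof eventually_elim
      case (elim z)
      show ?case by (rule q_Chu_Vandermonde_shifted_generic[OF Q QQ x elim])
    qed
  qed
  from at_within_isCont_imp_nhds[OF this cont_F cont_R] show ?thesis
    by (rule eventually_nhds_x_imp_x)
qed

lemma q_Chu_Vandermonde_power_moment:
  assumes Q: "Q \<noteq> 0" and QQ: "\<And>m. qpoch Q Q m \<noteq> 0"
    and x: "x \<noteq> 0" and y: "y \<noteq> 0" and yn: "qpoch y Q n \<noteq> 0"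
    and xyn: "\<And>l. qpoch (x * Q / (y * Q ^ n)) Q l \<noteq> 0"
  shows "(\<Sum>k\<le>n. qpoch (1 / Q ^ n) Q k * qpoch x Q k * Q ^ k / (qpoch Q Q k * qpoch y Q k) * Q ^ (k * m))
         / qpoch Q Q m
       = x ^ n * qpoch (y / x) Q n / qpoch y Q n
         * (\<Sum>i\<le>m. qpoch (Q / (y * Q ^ n)) Q i * qpoch (Q * x / y) Q i
              / (qpoch (x * Q / (y * Q ^ n)) Q i * qpoch Q Q i) * ((Q / y) ^ (m - i) / qpoch Q Q (m - i)))"
proof -
  define w where "w k = qpoch (1 / Q ^ n) Q k * qpoch x Q k * Q ^ k / (qpoch Q Q k * qpoch y Q k)" for k
  define C where "C = x ^ n * qpoch (y / x) Q n / qpoch y Q n"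
  define B where "B i = qpoch (Q / (y * Q ^ n)) Q i * qpoch (Q * x / y) Q i / qpoch (x * Q / (y * Q ^ n)) Q i"
    for i
  have "(\<Sum>k\<le>n. w k * Q ^ (k * m)) / qpoch Q Q m = (\<Sum>k\<le>n. w k * (Q ^ (k * m) / qpoch Q Q m))"
    by (simp add: sum_divide_distrib)
  also have "\<dots> = (\<Sum>k\<le>n. w k * (\<Sum>i\<le>m. qpoch (Q / y / Q ^ k) Q i * Q ^ (k * i) / qpoch Q Q i
                                          * ((Q / y) ^ (m - i) / qpoch Q Q (m - i))))"
    by (simp only: power_div_qpoch_expansion[OF Q QQ, where a="Q / y"])
  also have "\<dots> = (\<Sum>i\<le>m. (\<Sum>k\<le>n. w k * (qpoch (Q / y / Q ^ k) Q i * Q ^ (k * i)))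
                        / qpoch Q Q i * ((Q / y) ^ (m - i) / qpoch Q Q (m - i)))"
    by (simp add: sum_distrib_left sum_divide_distrib sum_distrib_right mult_ac sum.swap[of _ "{..n}"])
  also have "\<dots> = C * (\<Sum>i\<le>m. B i / qpoch Q Q i * ((Q / y) ^ (m - i) / qpoch Q Q (m - i)))"
    unfolding w_def C_def B_def q_Chu_Vandermonde_shifted[OF Q QQ x y yn xyn]
    by (simp add: sum_distrib_left mult_ac)
  finally show ?thesis by (simp add: w_def C_def B_def mult_ac)
qed

section \<open>Subexponential growth and double series\<close>

definition subexponential :: "(nat \<Rightarrow> 'a::real_normed_vector) \<Rightarrow> bool" where
  "subexponential s \<longleftrightarrow> (\<forall>\<theta>>1. \<exists>K. \<forall>m. norm (s m) \<le> K * \<theta> ^ m)"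

lemma subexponential_if_ratio_tendsto:
  fixes s \<rho> :: "nat \<Rightarrow> 'a::real_normed_algebra"
  assumes rec: "\<And>m. s (Suc m) = s m * \<rho> m" and lim: "\<rho> \<longlonglongrightarrow> L" and L: "norm L \<le> 1"
  shows "subexponential s"
  unfolding subexponential_def
proof (intro allI impI)
  fix \<theta> :: real assume "1 < \<theta>"
  have "\<forall>\<^sub>F m in sequentially. norm (\<rho> m) < \<theta>"
    using order_tendstoD(2)[OF tendsto_norm[OF lim], of \<theta>] L \<open>1 < \<theta>\<close> by simp
  then obtain N where N: "\<And>m. N \<le> m \<Longrightarrow> norm (\<rho> m) \<le> \<theta>"
    unfolding eventually_sequentially by (meson less_imp_le)
  define K where "K = (\<Sum>i\<le>N. norm (s i) / \<theta> ^ i)"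
  have initial: "norm (s m) \<le> K * \<theta> ^ m" if "m \<le> N" for m
  proof -
    have "norm (s m) / \<theta> ^ m \<le> K"
      unfolding K_def using that \<open>1 < \<theta>\<close> by (intro member_le_sum) auto
    then show ?thesis using \<open>1 < \<theta>\<close> by (simp add: divide_le_eq)
  qed
  have "norm (s m) \<le> K * \<theta> ^ m" for m
  proof (induction m)
    case 0
    show ?case by (rule initial) simp
  next
    case (Suc m)
    show ?case
    proof (cases "Suc m \<le> N")
      case True
      then show ?thesis by (rule initial)
    next
      case False
      have "norm (s (Suc m)) \<le> norm (s m) * norm (\<rho> m)"
        by (simp add: rec norm_mult_ineq)
      also have "\<dots> \<le> (K * \<theta> ^ m) * \<theta>"
        using Suc.IH N[of m] False order_trans[OF norm_ge_zero Suc.IH] by (intro mult_mono) auto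
      finally show ?thesis by (simp add: mult_ac)
    qed
  qed
  then show "\<exists>K. \<forall>m. norm (s m) \<le> K * \<theta> ^ m" by blast
qed

lemma subexponential_mult:
  fixes f g :: "nat \<Rightarrow> 'a::real_normed_algebra"
  assumes f: "subexponential f" and g: "subexponential g"
  shows "subexponential (\<lambda>m. f m * g m)"
  unfolding subexponential_def
proof (intro allI impI)
  fix \<theta> :: real assume "1 < \<theta>"
  then have "1 < sqrt \<theta>" by simp
  then obtain K1 K2 where K1: "\<And>m. norm (f m) \<le> K1 * sqrt \<theta> ^ m"
    and K2: "\<And>m. norm (g m) \<le> K2 * sqrt \<theta> ^ m"
    using f g unfolding subexponential_def by meson
  have "norm (f m * g m) \<le> (K1 * K2) * \<theta> ^ m" for m
  proof -
    have "norm (f m * g m) \<le> (K1 * sqrt \<theta> ^ m) * (K2 * sqrt \<theta> ^ m)"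
      using K1[of m] K2[of m] norm_mult_ineq[of "f m" "g m"]
      by (smt (verit, best) mult_mono norm_ge_zero)
    also have "\<dots> = (K1 * K2) * \<theta> ^ m"
      using \<open>1 < \<theta>\<close> by (simp add: power_mult_distrib[symmetric] mult_ac)
    finally show ?thesis .
  qed
  then show "\<exists>K. \<forall>m. norm (f m * g m) \<le> K * \<theta> ^ m" by blast
qed

lemma subexponential_qpoch:
  assumes "norm Q < 1"
  shows "subexponential (\<lambda>m. qpoch a Q m)"
proof (rule subexponential_if_ratio_tendsto)
  show "qpoch a Q (Suc m) = qpoch a Q m * (1 - a * Q ^ m)" for m
    by (rule qpoch_Suc)
  have "(\<lambda>m. a * Q ^ m) \<longlonglongrightarrow> 0"
    using LIMSEQ_power_zero[OF assms] by (rule tendsto_mult_right_zero)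
  then show "(\<lambda>m. 1 - a * Q ^ m) \<longlonglongrightarrow> 1"
    using tendsto_diff[OF tendsto_const[of 1]] by fastforce
qed simp

lemma subexponential_inverse_qpoch:
  assumes "norm Q < 1"
  shows "subexponential (\<lambda>m. inverse (qpoch a Q m))"
proof (rule subexponential_if_ratio_tendsto)
  show "inverse (qpoch a Q (Suc m)) = inverse (qpoch a Q m) * inverse (1 - a * Q ^ m)" for m
    by (simp add: qpoch_Suc)
  have "(\<lambda>m. a * Q ^ m) \<longlonglongrightarrow> 0"
    using LIMSEQ_power_zero[OF assms] by (rule tendsto_mult_right_zero)
  then show "(\<lambda>m. inverse (1 - a * Q ^ m)) \<longlonglongrightarrow> 1"
    using tendsto_inverse[OF tendsto_diff[OF tendsto_const[of 1]]] by fastforce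
qed simp

lemma summable_subexponential_mult_power:
  fixes f :: "nat \<Rightarrow> complex"
  assumes f: "subexponential f" and z: "norm z < 1"
  shows "summable (\<lambda>m. f m * z ^ m)"
proof -
  define \<theta> where "\<theta> = 2 / (1 + norm z)"
  have "0 < 1 + norm z" by (simp add: add_pos_nonneg)
  then have "1 < \<theta>" and c: "\<theta> * norm z < 1"
    using z by (simp_all add: \<theta>_def field_simps)
  then obtain K where K: "\<And>m. norm (f m) \<le> K * \<theta> ^ m"
    using f unfolding subexponential_def by blast
  show ?thesis
  proof (rule summable_comparison_test')
    show "summable (\<lambda>m. K * (\<theta> * norm z) ^ m)"
      using c by (intro summable_mult summable_geometric) (simp add: \<theta>_def)
    show "norm (f m * z ^ m) \<le> K * (\<theta> * norm z) ^ m" for m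
      using mult_right_mono[OF K[of m], of "norm z ^ m"]
      by (simp add: norm_mult norm_power power_mult_distrib mult.assoc)
  qed
qed

lemma summable_on_pairs_geometric_bound:
  fixes t :: "nat \<times> nat \<Rightarrow> complex"
  assumes bound: "\<And>k j. norm (t (k, j)) \<le> K * c ^ (k + j)" and "0 \<le> c" "c < 1"
  shows "t summable_on UNIV"
proof -
  have "0 \<le> K" using order_trans[OF norm_ge_zero bound[of 0 0]] by simp
  have "(\<lambda>(k, j). K * c ^ k * c ^ j) summable_on (SIGMA k:UNIV. UNIV)"
  proof (rule summable_on_SigmaI[where g="\<lambda>k. K * c ^ k * (1 / (1 - c))"])
    show "((\<lambda>j. (\<lambda>(k, j). K * c ^ k * c ^ j) (k, j)) has_sum (K * c ^ k * (1 / (1 - c)))) UNIV" for k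
      unfolding prod.case using assms \<open>0 \<le> K\<close>
      by (intro sums_nonneg_imp_has_sum sums_mult geometric_sums) auto
    show "(\<lambda>k. K * c ^ k * (1 / (1 - c))) summable_on UNIV"
      using assms \<open>0 \<le> K\<close>
      by (intro summable_nonneg_imp_summable_on summable_mult2 summable_mult summable_geometric) auto
  qed (use assms \<open>0 \<le> K\<close> in auto)
  then have "(\<lambda>(k, j). K * c ^ k * c ^ j) summable_on UNIV"
    by simp
  then have "(\<lambda>x. norm (t x)) summable_on UNIV"
    by (rule Infinite_Sum.abs_summable_on_comparison_test')
      (use bound in \<open>auto simp: power_add mult.assoc\<close>)
  then show ?thesis by (rule abs_summable_summable)
qed

lemma summable_on_subexponential_pairs:
  fixes \<alpha> \<beta> \<gamma> :: "nat \<Rightarrow> complex"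
  assumes \<alpha>: "subexponential \<alpha>" and \<beta>: "subexponential \<beta>" and \<gamma>: "subexponential \<gamma>"
    and u: "norm u < 1" and us: "norm (u * s) < 1"
  shows "(\<lambda>(k, j). \<alpha> (k + j) * \<beta> k * \<gamma> j * u ^ (k + j) * s ^ j) summable_on UNIV"
proof -
  define \<rho> where "\<rho> = max (norm u) (norm (u * s))"
  define \<theta> where "\<theta> = 2 / (1 + \<rho>)"
  have "0 \<le> \<rho>" "\<rho> < 1" using u us by (auto simp: \<rho>_def le_max_iff_disj)
  then have "1 < sqrt \<theta>" and c: "0 \<le> \<theta> * \<rho>" "\<theta> * \<rho> < 1"
    by (simp_all add: \<theta>_def field_simps)
  then obtain K1 K2 K3 where K1: "\<And>m. norm (\<alpha> m) \<le> K1 * sqrt \<theta> ^ m"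
    and K2: "\<And>m. norm (\<beta> m) \<le> K2 * sqrt \<theta> ^ m" and K3: "\<And>m. norm (\<gamma> m) \<le> K3 * sqrt \<theta> ^ m"
    using \<alpha> \<beta> \<gamma> unfolding subexponential_def by meson
  show ?thesis
  proof (rule summable_on_pairs_geometric_bound[OF _ c])
    fix k j
    have "u ^ (k + j) * s ^ j = u ^ k * (u * s) ^ j"
      by (simp add: power_add power_mult_distrib)
    then have "norm (u ^ (k + j) * s ^ j) = norm u ^ k * norm (u * s) ^ j"
      by (simp add: norm_mult norm_power)
    also have "\<dots> \<le> \<rho> ^ k * \<rho> ^ j"
      using \<open>0 \<le> \<rho>\<close> by (intro mult_mono power_mono) (auto simp: \<rho>_def)
    finally have uv: "norm (u ^ (k + j) * s ^ j) \<le> \<rho> ^ k * \<rho> ^ j" .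
    have abc: "norm (\<alpha> (k + j) * \<beta> k * \<gamma> j)
        \<le> (K1 * sqrt \<theta> ^ (k + j)) * (K2 * sqrt \<theta> ^ k) * (K3 * sqrt \<theta> ^ j)"
      using K1[of "k + j"] K2[of k] K3[of j]
      by (simp add: norm_mult mult_mono' mult_mono)
    have "norm (\<alpha> (k + j) * \<beta> k * \<gamma> j * (u ^ (k + j) * s ^ j))
        \<le> (K1 * sqrt \<theta> ^ (k + j)) * (K2 * sqrt \<theta> ^ k) * (K3 * sqrt \<theta> ^ j) * (\<rho> ^ k * \<rho> ^ j)"
      unfolding norm_mult[of _ "u ^ (k + j) * s ^ j"]
      using uv abc order_trans[OF norm_ge_zero abc] by (intro mult_mono) auto
    also have "\<dots> = (K1 * K2 * K3) * (\<theta> * \<rho>) ^ (k + j)"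
      using \<open>1 < sqrt \<theta>\<close>
      by (simp add: power_add power_mult_distrib[symmetric] real_sqrt_mult_self mult_ac)
    finally show "norm (case (k, j) of (k, j) \<Rightarrow> \<alpha> (k + j) * \<beta> k * \<gamma> j * u ^ (k + j) * s ^ j)
        \<le> (K1 * K2 * K3) * (\<theta> * \<rho>) ^ (k + j)"
      by (simp add: mult.assoc)
  qed
qed

lemma sums_diagonal_of_summable_on_pairs:
  fixes t :: "nat \<times> nat \<Rightarrow> complex"
  assumes "t summable_on UNIV"
  shows "(\<lambda>m. \<Sum>i\<le>m. t (i, m - i)) sums infsum t UNIV"
proof -
  have bij: "bij_betw (\<lambda>(m, i). (i, m - i)) (SIGMA m:UNIV. {..m}) (UNIV :: (nat \<times> nat) set)"
    by (rule bij_betw_byWitness[where f'="\<lambda>(k, j). (k + j, k)"]) auto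
  have "((\<lambda>(m, i). t (i, m - i)) has_sum infsum t UNIV) (SIGMA m:UNIV. {..m})"
    using has_sum_reindex_bij_betw[OF bij, of t] has_sum_infsum[OF assms]
    by (simp add: case_prod_unfold)
  then have "((\<lambda>m. \<Sum>i\<le>m. t (i, m - i)) has_sum infsum t UNIV) UNIV"
    by (rule has_sum_Sigma'[where b="\<lambda>m. \<Sum>i\<le>m. t (i, m - i)"]) simp
  then show ?thesis by (rule has_sum_imp_sums)
qed

lemma sums_diagonal_subexponential_pairs:
  fixes \<alpha> \<beta> \<gamma> :: "nat \<Rightarrow> complex"
  assumes "subexponential \<alpha>" and "subexponential \<beta>" and "subexponential \<gamma>"
    and "norm u < 1" and "norm (u * s) < 1"
  shows "(\<lambda>m. \<alpha> m * u ^ m * (\<Sum>i\<le>m. \<beta> i * \<gamma> (m - i) * s ^ (m - i)))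
           sums infsum (\<lambda>(k, j). \<alpha> (k + j) * \<beta> k * \<gamma> j * u ^ (k + j) * s ^ j) UNIV"
  using sums_diagonal_of_summable_on_pairs[OF summable_on_subexponential_pairs[OF assms]]
  by (simp add: sum_distrib_left mult_ac)

lemma phi32_weighted_sum_eq_suminf:
  assumes Q: "norm Q < 1" and u: "norm u < 1"
  shows "(\<Sum>k\<le>n. c k * phi32 r f g v w Q (u * Q ^ k))
       = (\<Sum>m. qpoch r Q m * qpoch f Q m * qpoch g Q m / (qpoch v Q m * qpoch w Q m) * u ^ m
               * ((\<Sum>k\<le>n. c k * Q ^ (k * m)) / qpoch Q Q m))"
proof -
  define a where "a m = qpoch r Q m * qpoch f Q m * qpoch g Q m / (qpoch v Q m * qpoch w Q m)
                        * inverse (qpoch Q Q m)" for m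
  have "subexponential a"
    unfolding a_def[abs_def] divide_inverse inverse_mult_distrib
    by (intro subexponential_mult subexponential_qpoch[OF Q] subexponential_inverse_qpoch[OF Q])
  moreover have "norm (u * Q ^ k) < 1" for k
  proof -
    have "norm Q ^ k \<le> 1" using Q by (simp add: power_le_one)
    then show ?thesis
      using mult_left_mono[of "norm Q ^ k" 1 "norm u"] u by (simp add: norm_mult norm_power)
  qed
  ultimately have summable: "summable (\<lambda>m. a m * (u * Q ^ k) ^ m)" for k
    by (rule summable_subexponential_mult_power)
  have "phi32 r f g v w Q z = (\<Sum>m. a m * z ^ m)" for z
    by (simp add: phi32_def a_def divide_inverse mult_ac)
  then have "(\<Sum>k\<le>n. c k * phi32 r f g v w Q (u * Q ^ k))
      = (\<Sum>k\<le>n. \<Sum>m. c k * (a m * (u * Q ^ k) ^ m))"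
    by (simp add: suminf_mult summable)
  also have "\<dots> = (\<Sum>m. \<Sum>k\<le>n. c k * (a m * (u * Q ^ k) ^ m))"
    by (intro suminf_sum[symmetric] summable_mult summable)
  also have "\<dots> = (\<Sum>m. qpoch r Q m * qpoch f Q m * qpoch g Q m / (qpoch v Q m * qpoch w Q m) * u ^ m
                        * ((\<Sum>k\<le>n. c k * Q ^ (k * m)) / qpoch Q Q m))"
  proof (rule suminf_cong)
    fix m
    have "(u * Q ^ k) ^ m = u ^ m * Q ^ (k * m)" for k
      by (simp add: power_mult_distrib power_mult)
    then show "(\<Sum>k\<le>n. c k * (a m * (u * Q ^ k) ^ m))
        = qpoch r Q m * qpoch f Q m * qpoch g Q m / (qpoch v Q m * qpoch w Q m) * u ^ m
          * ((\<Sum>k\<le>n. c k * Q ^ (k * m)) / qpoch Q Q m)"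
      by (simp add: a_def sum_distrib_left sum_divide_distrib divide_inverse mult_ac)
  qed
  finally show ?thesis .
qed

lemma phi32_terminating_sum_expansion:
  fixes Q x y r f g v w u :: complex and n :: nat
  assumes Q: "Q \<noteq> 0" "norm Q < 1"
    and x: "x \<noteq> 0" and y: "y \<noteq> 0" and yn: "qpoch y Q n \<noteq> 0"
    and xyn: "\<And>m. qpoch (x * Q / (y * Q ^ n)) Q m \<noteq> 0"
    and u: "norm u < 1" and uy: "norm (u * Q / y) < 1"
  shows "(\<Sum>k\<le>n. qpoch (1 / Q ^ n) Q k * qpoch x Q k * Q ^ k / (qpoch Q Q k * qpoch y Q k)
                   * phi32 r f g v w Q (u * Q ^ k))
       = x ^ n * qpoch (y / x) Q n / qpoch y Q n
         * infsum (\<lambda>(k, j). qpoch r Q (k + j) * qpoch f Q (k + j) * qpoch g Q (k + j)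
                     / (qpoch Q Q j * qpoch v Q (k + j) * qpoch w Q (k + j))
                     * (qpoch (Q / (y * Q ^ n)) Q k * qpoch (Q * x / y) Q k)
                     / (qpoch (x * Q / (y * Q ^ n)) Q k * qpoch Q Q k)
                     * u ^ (k + j) * (Q / y) ^ j)
                  UNIV"
    (is "?lhs = ?C * infsum ?t UNIV")
proof -
  have QQ: "\<And>m. qpoch Q Q m \<noteq> 0" using qpoch_self_nonzero[OF Q(2)] .
  define A where "A m = qpoch r Q m * qpoch f Q m * qpoch g Q m / (qpoch v Q m * qpoch w Q m)" for m
  define B where "B k = qpoch (Q / (y * Q ^ n)) Q k * qpoch (Q * x / y) Q k
                        / (qpoch (x * Q / (y * Q ^ n)) Q k * qpoch Q Q k)" for k
  define T where "T m = (\<Sum>i\<le>m. B i * inverse (qpoch Q Q (m - i)) * (Q / y) ^ (m - i))" for m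
  have "subexponential A" and "subexponential B" and "subexponential (\<lambda>j. inverse (qpoch Q Q j))"
    unfolding A_def[abs_def] B_def[abs_def] divide_inverse inverse_mult_distrib
    by (intro subexponential_mult subexponential_qpoch[OF Q(2)] subexponential_inverse_qpoch[OF Q(2)])+
  from sums_diagonal_subexponential_pairs[OF this u, of "Q / y"] uy
  have "(\<lambda>m. A m * u ^ m * T m)
      sums infsum (\<lambda>(k, j). A (k + j) * B k * inverse (qpoch Q Q j) * u ^ (k + j) * (Q / y) ^ j) UNIV"
    by (simp add: T_def)
  also have "(\<lambda>(k, j). A (k + j) * B k * inverse (qpoch Q Q j) * u ^ (k + j) * (Q / y) ^ j) = ?t"
    by (simp add: A_def B_def divide_inverse mult_ac)
  finally have "(\<lambda>m. ?C * (A m * u ^ m * T m)) sums (?C * infsum ?t UNIV)"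
    by (rule sums_mult)
  then have rhs: "?C * infsum ?t UNIV = (\<Sum>m. ?C * (A m * u ^ m * T m))"
    by (rule sums_unique)
  have "?lhs = (\<Sum>m. ?C * (A m * u ^ m * T m))"
    unfolding phi32_weighted_sum_eq_suminf[OF Q(2) u] q_Chu_Vandermonde_power_moment[OF Q(1) QQ x y yn xyn]
    by (simp add: A_def B_def T_def divide_inverse mult_ac)
  then show ?thesis
    unfolding rhs .
qed

theorem theorem4:
  fixes q :: real and n :: nat and x y r f g v w u :: complex
  assumes "0 < q" and "q < 1"
    and "y \<noteq> 0" and "x \<noteq> 0"
    and "\<And>m. qpoch v (complex_of_real q) m \<noteq> 0"
    and "\<And>m. qpoch w (complex_of_real q) m \<noteq> 0"
    and "qpoch y (complex_of_real q) n \<noteq> 0"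
    and "\<And>m. qpoch (x * complex_of_real q / (y * complex_of_real q ^ n)) (complex_of_real q) m \<noteq> 0"
    and "norm u < 1"
    and "norm (u * complex_of_real q / y) < 1"
  shows "(\<Sum>k\<le>n. qpoch (1 / complex_of_real q ^ n) (complex_of_real q) k
                   * qpoch x (complex_of_real q) k * complex_of_real q ^ k
                   / (qpoch (complex_of_real q) (complex_of_real q) k * qpoch y (complex_of_real q) k)
                   * phi32 r f g v w (complex_of_real q) (u * complex_of_real q ^ k))
       = x ^ n * qpoch (y / x) (complex_of_real q) n / qpoch y (complex_of_real q) n
         * infsum (\<lambda>(k, j). qpoch r (complex_of_real q) (k + j) * qpoch f (complex_of_real q) (k + j)
                     * qpoch g (complex_of_real q) (k + j)
                     / (qpoch (complex_of_real q) (complex_of_real q) j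
                        * qpoch v (complex_of_real q) (k + j) * qpoch w (complex_of_real q) (k + j))
                     * (qpoch (complex_of_real q / (y * complex_of_real q ^ n)) (complex_of_real q) k
                        * qpoch (complex_of_real q * x / y) (complex_of_real q) k)
                     / (qpoch (x * complex_of_real q / (y * complex_of_real q ^ n)) (complex_of_real q) k
                        * qpoch (complex_of_real q) (complex_of_real q) k)
                     * u ^ (k + j) * (complex_of_real q / y) ^ j)
                  (UNIV :: (nat \<times> nat) set)"
proof (rule phi32_terminating_sum_expansion)
  show "complex_of_real q \<noteq> 0" and "norm (complex_of_real q) < 1"
    using assms(1,2) by auto
qed (use assms in auto)

end
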